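(* For all $r\in\mathbb{N}$, $f_2(\triangle_r)\ge r-1$.
   Context: A distance function on $G$ is $d:E(G)\to\mathbb{R}_{\ge0}$ with $d(vw)\le\sum_i d(v_{i-1}v_i)$ for every edge $vw$ and every $v$–$w$ path. An isometric embedding of $(G,d)$ in $\ell_2^k$ is $\phi:V(G)\to\mathbb{R}^k$ with $\|\phi(v)-\phi(w)\|_2=d(vw)$ for all edges $vw$. $d$ is $\ell_2$-realizable if it has such an embedding for some $k$; $f_2(G,d)$ is the least such $k$; $f_2(G)=\sup_d f_2(G,d)$ over all $\ell_2$-realizable $d$. The triangular grid $\triangle_r$ has vertex set $\{v_{i,j}\mid i,j\in[r],\ i\le j\}$, with $v_{i,j}v_{k,\ell}$ an edge iff $(i-k,j-\ell)\in\{\pm(1,0),\pm(0,1),\pm(1,1)\}$. *)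

theory Defs
  imports "HOL-Analysis.Analysis" "HOL-Library.Extended_Nat"
begin

text \<open>A distance function is a map on edges
(represented as a function on 2-element sets; only its values on E matter).\<close>

definition is_path :: "'a set \<Rightarrow> 'a set set \<Rightarrow> 'a list \<Rightarrow> bool" where
  "is_path V E ps \<longleftrightarrow> ps \<noteq> [] \<and> distinct ps \<and> set ps \<subseteq> V \<and>
     (\<forall>i. Suc i < length ps \<longrightarrow> {ps ! i, ps ! Suc i} \<in> E)"

definition distance_function :: "'a set \<Rightarrow> 'a set set \<Rightarrow> ('a set \<Rightarrow> real) \<Rightarrow> bool" where
  "distance_function V E d \<longleftrightarrow>
     (\<forall>e\<in>E. d e \<ge> 0) \<and>
     (\<forall>v w ps. {v, w} \<in> E \<longrightarrow> is_path V E ps \<longrightarrow> hd ps = v \<longrightarrow> last ps = w \<longrightarrow>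
        d {v, w} \<le> (\<Sum>i<length ps - 1. d {ps ! i, ps ! Suc i}))"

text \<open>Points of \<ell>_2^k are represented as functions nat \<Rightarrow> real, only the
first k coordinates being relevant.\<close>

definition l2dist :: "nat \<Rightarrow> (nat \<Rightarrow> real) \<Rightarrow> (nat \<Rightarrow> real) \<Rightarrow> real" where
  "l2dist k x y = sqrt (\<Sum>i<k. (x i - y i)\<^sup>2)"

definition isometric_embedding ::
  "'a set \<Rightarrow> 'a set set \<Rightarrow> ('a set \<Rightarrow> real) \<Rightarrow> nat \<Rightarrow> ('a \<Rightarrow> nat \<Rightarrow> real) \<Rightarrow> bool" where
  "isometric_embedding V E d k \<phi> \<longleftrightarrow>
     (\<forall>v\<in>V. \<forall>i\<ge>k. \<phi> v i = 0) \<and>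
     (\<forall>v w. {v, w} \<in> E \<longrightarrow> l2dist k (\<phi> v) (\<phi> w) = d {v, w})"

definition embeddable :: "'a set \<Rightarrow> 'a set set \<Rightarrow> ('a set \<Rightarrow> real) \<Rightarrow> nat \<Rightarrow> bool" where
  "embeddable V E d k \<longleftrightarrow> (\<exists>\<phi>. isometric_embedding V E d k \<phi>)"

definition l2_realizable :: "'a set \<Rightarrow> 'a set set \<Rightarrow> ('a set \<Rightarrow> real) \<Rightarrow> bool" where
  "l2_realizable V E d \<longleftrightarrow> (\<exists>k. embeddable V E d k)"

definition f2_dist :: "'a set \<Rightarrow> 'a set set \<Rightarrow> ('a set \<Rightarrow> real) \<Rightarrow> nat" where
  "f2_dist V E d = (LEAST k. embeddable V E d k)"

definition f2 :: "'a set \<Rightarrow> 'a set set \<Rightarrow> enat" where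
  "f2 V E = (SUP d \<in> {d. distance_function V E d \<and> l2_realizable V E d}. enat (f2_dist V E d))"

definition tri_vertices :: "nat \<Rightarrow> (nat \<times> nat) set" where
  "tri_vertices r = {(i, j). 1 \<le> i \<and> i \<le> j \<and> j \<le> r}"

definition tri_edges :: "nat \<Rightarrow> (nat \<times> nat) set set" where
  "tri_edges r = {{(i, j), (k, l)} | i j k l.
      (i, j) \<in> tri_vertices r \<and> (k, l) \<in> tri_vertices r \<and>
      (int i - int k, int j - int l) \<in> {(1,0), (-1,0), (0,1), (0,-1), (1,1), (-1,-1)}}"

end

theory Submission
  imports Defs "HOL-Library.Function_Algebras"
begin

text \<open>Realize the grid in \<open>\<ell>\<^sub>2\<^sup>r\<^sup>+\<^sup>1\<close> by sending \<open>v\<^sub>i\<^sub>,\<^sub>i\<close> to the unit vector \<open>e\<^sub>i\<close> and every other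
vertex \<open>v\<^sub>i\<^sub>,\<^sub>j\<close> to the midpoint of \<open>v\<^sub>i\<^sub>,\<^sub>j\<^sub>-\<^sub>1\<close> and \<open>v\<^sub>i\<^sub>+\<^sub>1\<^sub>,\<^sub>j\<close>, and take \<open>d\<close> to be the induced edge
lengths.  In any other realization \<open>\<phi>\<close> of \<open>d\<close> the triangle \<open>v\<^sub>i\<^sub>,\<^sub>j\<^sub>-\<^sub>1, v\<^sub>i\<^sub>,\<^sub>j, v\<^sub>i\<^sub>+\<^sub>1\<^sub>,\<^sub>j\<close> is degenerate, so
\<open>\<phi>(v\<^sub>i\<^sub>,\<^sub>j)\<close> is again a midpoint.  By Apollonius' formula the difference of the squared
distances in the two realizations then satisfies the same mean value recurrence in each
argument; it vanishes on edges, and an induction on the span of a pair of vertices shows that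
it vanishes everywhere.  Hence the points \<open>\<phi>(v\<^sub>i\<^sub>,\<^sub>i)\<close> form a regular simplex with \<open>r\<close> vertices,
which needs dimension at least \<open>r - 1\<close>.\<close>

definition sqdist :: "nat \<Rightarrow> (nat \<Rightarrow> real) \<Rightarrow> (nat \<Rightarrow> real) \<Rightarrow> real" where
  "sqdist k x y = (\<Sum>c<k. (x c - y c)\<^sup>2)"

lemma l2dist_eq_sqrt_sqdist: "l2dist k x y = sqrt (sqdist k x y)"
  by (simp add: l2dist_def sqdist_def)

lemma sqdist_nonneg: "0 \<le> sqdist k x y"
  by (simp add: sqdist_def sum_nonneg)

lemma sqdist_commute: "sqdist k x y = sqdist k y x"
  by (simp add: sqdist_def power2_commute)

lemma sqdist_self [simp]: "sqdist k x x = 0"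
  by (simp add: sqdist_def)

lemma l2dist_commute: "l2dist k x y = l2dist k y x"
  by (simp add: l2dist_eq_sqrt_sqdist sqdist_commute)

lemma sqdist_eq_if_l2dist_eq: "l2dist k x y = l2dist k' x' y' \<Longrightarrow> sqdist k x y = sqdist k' x' y'"
  by (simp add: l2dist_eq_sqrt_sqdist sqdist_nonneg)

lemma l2dist_triangle: "l2dist k x z \<le> l2dist k x y + l2dist k y z"
  using L2_set_triangle_ineq[of "\<lambda>c. x c - y c" "\<lambda>c. y c - z c" "{..<k}"]
  by (simp add: l2dist_def L2_set_def)

lemma l2dist_le_sum_l2dist: "l2dist k (x 0) (x n) \<le> (\<Sum>i<n. l2dist k (x i) (x (Suc i)))"
proof (induction n)
  case (Suc n)
  have "l2dist k (x 0) (x (Suc n)) \<le> l2dist k (x 0) (x n) + l2dist k (x n) (x (Suc n))"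
    by (rule l2dist_triangle)
  with Suc show ?case by simp
qed (simp add: l2dist_def)

lemma sqdist_midpoint:
  assumes "\<And>c. c < k \<Longrightarrow> m c = (x c + y c) / 2"
  shows "sqdist k z m = (sqdist k z x + sqdist k z y) / 2 - sqdist k x y / 4"
proof -
  have "sqdist k z m = (\<Sum>c<k. ((z c - x c)\<^sup>2 + (z c - y c)\<^sup>2) / 2 - (x c - y c)\<^sup>2 / 4)"
    unfolding sqdist_def
    by (intro sum.cong refl) (simp add: assms power2_eq_square field_simps)
  then show ?thesis
    by (simp add: sqdist_def sum_subtractf sum.distrib flip: sum_divide_distrib)
qed

lemma sqdist_to_midpoint:
  assumes "\<And>c. c < k \<Longrightarrow> m c = (x c + y c) / 2"
  shows "sqdist k x m = sqdist k x y / 4" "sqdist k m y = sqdist k x y / 4"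
proof -
  have "sqdist k x m = (sqdist k x x + sqdist k x y) / 2 - sqdist k x y / 4"
    using assms by (rule sqdist_midpoint)
  moreover have "sqdist k y m = (sqdist k y x + sqdist k y y) / 2 - sqdist k x y / 4"
    using assms by (rule sqdist_midpoint)
  ultimately show "sqdist k x m = sqdist k x y / 4" "sqdist k m y = sqdist k x y / 4"
    by (simp_all add: sqdist_commute)
qed

lemma midpoint_if_sqdist_quarter:
  assumes "sqdist k x m = sqdist k x y / 4" "sqdist k m y = sqdist k x y / 4" "c < k"
  shows "m c = (x c + y c) / 2"
proof -
  have "(\<Sum>c<k. (x c + y c - 2 * m c)\<^sup>2)
      = (\<Sum>c<k. 2 * (x c - m c)\<^sup>2 + 2 * (m c - y c)\<^sup>2 - (x c - y c)\<^sup>2)"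
    by (intro sum.cong refl) (simp add: power2_eq_square algebra_simps)
  also have "\<dots> = 2 * sqdist k x m + 2 * sqdist k m y - sqdist k x y"
    by (simp add: sqdist_def sum_subtractf sum.distrib sum_distrib_left)
  finally have "(\<Sum>c<k. (x c + y c - 2 * m c)\<^sup>2) = 0"
    using assms(1,2) by simp
  with \<open>c < k\<close> have "(x c + y c - 2 * m c)\<^sup>2 = 0"
    by (simp add: sum_nonneg_eq_0_iff)
  then show ?thesis by simp
qed

definition edge_length :: "nat \<Rightarrow> ('a \<Rightarrow> nat \<Rightarrow> real) \<Rightarrow> 'a set \<Rightarrow> real" where
  "edge_length k \<phi> e = (SOME x. \<exists>u v. e = {u, v} \<and> x = l2dist k (\<phi> u) (\<phi> v))"

lemma edge_length_doubleton: "edge_length k \<phi> {u, v} = l2dist k (\<phi> u) (\<phi> v)"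
proof -
  have "\<exists>x u' v'. {u, v} = {u', v'} \<and> x = l2dist k (\<phi> u') (\<phi> v')" by blast
  from someI_ex[OF this] obtain u' v' where "{u, v} = {u', v'}"
    "edge_length k \<phi> {u, v} = l2dist k (\<phi> u') (\<phi> v')"
    unfolding edge_length_def by blast
  then show ?thesis by (auto simp: doubleton_eq_iff l2dist_commute)
qed

lemma distance_function_edge_length:
  assumes "\<And>e. e \<in> E \<Longrightarrow> \<exists>u v. e = {u, v}"
  shows "distance_function V E (edge_length k \<phi>)"
  unfolding distance_function_def
proof (intro conjI ballI allI impI)
  fix e assume "e \<in> E"
  with assms obtain u v where "e = {u, v}" by blast
  then show "0 \<le> edge_length k \<phi> e"
    by (simp add: edge_length_doubleton l2dist_eq_sqrt_sqdist sqdist_nonneg)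
next
  fix v w ps
  assume "is_path V E ps" "hd ps = v" "last ps = w"
  then have "ps \<noteq> []" "v = ps ! 0" "w = ps ! (length ps - 1)"
    by (auto simp: is_path_def hd_conv_nth last_conv_nth)
  then show "edge_length k \<phi> {v, w} \<le> (\<Sum>i<length ps - 1. edge_length k \<phi> {ps ! i, ps ! Suc i})"
    using l2dist_le_sum_l2dist[of k "\<lambda>i. \<phi> (ps ! i)" "length ps - 1"]
    by (simp add: edge_length_doubleton)
qed

lemma isometric_embedding_edge_length:
  assumes "\<And>v i. v \<in> V \<Longrightarrow> k \<le> i \<Longrightarrow> \<phi> v i = 0"
  shows "isometric_embedding V E (edge_length k \<phi>) k \<phi>"
  using assms by (simp add: isometric_embedding_def edge_length_doubleton)

lemma embeddable_f2_dist: "embeddable V E d k \<Longrightarrow> embeddable V E d (f2_dist V E d)"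
  unfolding f2_dist_def by (rule LeastI)

lemma f2_dist_le_f2:
  "distance_function V E d \<Longrightarrow> embeddable V E d k \<Longrightarrow> enat (f2_dist V E d) \<le> f2 V E"
  unfolding f2_def l2_realizable_def by (rule SUP_upper) blast

section \<open>Regular simplices\<close>

interpretation fun_vec: vector_space "\<lambda>(a::real) (x::nat \<Rightarrow> real) c. a * x c"
  by unfold_locales (simp_all add: fun_eq_iff algebra_simps)

definition unit_vec :: "nat \<Rightarrow> nat \<Rightarrow> real" where
  "unit_vec i c = (if c = i then 1 else 0)"

lemma sum_fun_apply: "(\<Sum>a\<in>A. f a) c = (\<Sum>a\<in>A. f a c)"
  by (induction A rule: infinite_finite_induct) auto

lemma truncation_in_span_unit_vec:
  "(\<lambda>c. if c < k then x c else 0) \<in> fun_vec.span (unit_vec ` {..<k})"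
proof -
  have "(\<lambda>c. if c < k then x c else 0) = (\<Sum>i<k. (\<lambda>c. x i * unit_vec i c))"
    by (simp add: fun_eq_iff sum_fun_apply unit_vec_def if_distrib[of "(*) _"] cong: if_cong)
  also have "\<dots> \<in> fun_vec.span (unit_vec ` {..<k})"
    by (intro fun_vec.span_sum fun_vec.span_scale fun_vec.span_base) auto
  finally show ?thesis .
qed

lemma sum_square_linear_combination:
  fixes t :: "'a \<Rightarrow> real"
  shows "(\<Sum>c\<in>C. (\<Sum>a\<in>A. t a * w a c)\<^sup>2) = (\<Sum>a\<in>A. \<Sum>b\<in>A. t a * t b * (\<Sum>c\<in>C. w a c * w b c))"
proof -
  have "(\<Sum>c\<in>C. (\<Sum>a\<in>A. t a * w a c)\<^sup>2) = (\<Sum>c\<in>C. \<Sum>a\<in>A. \<Sum>b\<in>A. t a * t b * (w a c * w b c))"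
    by (simp add: power2_eq_square sum_product mult_ac)
  also have "\<dots> = (\<Sum>a\<in>A. \<Sum>b\<in>A. \<Sum>c\<in>C. t a * t b * (w a c * w b c))"
    by (subst sum.swap) (simp add: sum.swap[of _ C])
  finally show ?thesis by (simp add: sum_distrib_left)
qed

lemma sum_sum_one_plus_id:
  fixes t :: "'a \<Rightarrow> real"
  assumes "finite A"
  shows "(\<Sum>a\<in>A. \<Sum>b\<in>A. t a * t b * (if a = b then 2 else 1)) = (\<Sum>a\<in>A. t a)\<^sup>2 + (\<Sum>a\<in>A. (t a)\<^sup>2)"
proof -
  have "(\<Sum>b\<in>A. t a * t b * (if a = b then 2 else 1)) = t a * (\<Sum>b\<in>A. t b) + (t a)\<^sup>2"
    if "a \<in> A" for a
  proof -
    have "(\<Sum>b\<in>A. t a * t b * (if a = b then 2 else 1))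
        = (\<Sum>b\<in>A. t a * t b + (if a = b then (t a)\<^sup>2 else 0))"
      by (rule sum.cong) (auto simp: power2_eq_square)
    with assms that show ?thesis by (simp add: sum.distrib sum_distrib_left)
  qed
  then show ?thesis
    by (simp add: sum.distrib power2_eq_square flip: sum_distrib_right)
qed

text \<open>The Gram matrix \<open>\<delta> (I + J)\<close> is positive definite.\<close>

lemma independent_if_gram_one_plus_id:
  fixes w :: "'a \<Rightarrow> nat \<Rightarrow> real"
  assumes "finite B" "\<delta> > 0"
    and gram: "\<And>a b. a \<in> B \<Longrightarrow> b \<in> B \<Longrightarrow> (\<Sum>c<k. w a c * w b c) = \<delta> * (if a = b then 2 else 1)"
  shows "inj_on w B" "fun_vec.independent (w ` B)"
proof -
  show inj: "inj_on w B"
  proof (rule inj_onI, rule ccontr)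
    fix a b assume "a \<in> B" "b \<in> B" "w a = w b" "a \<noteq> b"
    then have "(\<Sum>c<k. w a c * w a c) = (\<Sum>c<k. w a c * w b c)" by simp
    with gram \<open>a \<in> B\<close> \<open>b \<in> B\<close> \<open>a \<noteq> b\<close> \<open>\<delta> > 0\<close> show False by simp
  qed
  have coeffs_zero: "t a = 0" if comb: "(\<Sum>a\<in>B. (\<lambda>c. t a * w a c)) = 0" and "a \<in> B" for t a
  proof -
    have "(\<Sum>a\<in>B. t a * w a c) = 0" for c
      using fun_cong[OF comb, of c] by (simp add: sum_fun_apply)
    then have "0 = (\<Sum>c<k. (\<Sum>a\<in>B. t a * w a c)\<^sup>2)" by simp
    also have "\<dots> = \<delta> * ((\<Sum>a\<in>B. t a)\<^sup>2 + (\<Sum>a\<in>B. (t a)\<^sup>2))"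
      by (simp add: sum_square_linear_combination gram sum_distrib_left mult_ac
          flip: sum_sum_one_plus_id[OF \<open>finite B\<close>])
    finally have "(\<Sum>a\<in>B. (t a)\<^sup>2) = 0"
      using \<open>\<delta> > 0\<close> by (simp add: add_nonneg_eq_0_iff sum_nonneg)
    with \<open>finite B\<close> \<open>a \<in> B\<close> show "t a = 0" by (simp add: sum_nonneg_eq_0_iff)
  qed
  show "fun_vec.independent (w ` B)"
  proof
    assume "fun_vec.dependent (w ` B)"
    then obtain u a where "a \<in> B" "u (w a) \<noteq> 0" "(\<Sum>v\<in>w ` B. (\<lambda>c. u v * v c)) = 0"
      using \<open>finite B\<close> by (auto simp: fun_vec.dependent_finite)
    then show False
      using coeffs_zero[of "\<lambda>a. u (w a)"] by (auto simp: sum.reindex[OF inj])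
  qed
qed

lemma card_le_Suc_if_pairwise_sqdist:
  fixes x :: "'a \<Rightarrow> nat \<Rightarrow> real"
  assumes "finite A" "\<delta> > 0"
    and dist: "\<And>a b. a \<in> A \<Longrightarrow> b \<in> A \<Longrightarrow> a \<noteq> b \<Longrightarrow> sqdist k (x a) (x b) = \<delta>"
  shows "card A \<le> Suc k"
proof (cases "A = {}")
  case False
  then obtain a0 where "a0 \<in> A" by blast
  define B where "B = A - {a0}"
  define w where "w a = (\<lambda>c. if c < k then x a c - x a0 c else 0)" for a
  have gram: "(\<Sum>c<k. w a c * w b c) = \<delta> / 2 * (if a = b then 2 else 1)"
    if "a \<in> B" "b \<in> B" for a b
  proof -
    have "(\<Sum>c<k. w a c * w b c)
        = (\<Sum>c<k. ((x a c - x a0 c)\<^sup>2 + (x b c - x a0 c)\<^sup>2 - (x a c - x b c)\<^sup>2) / 2)"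
      by (intro sum.cong refl) (simp add: w_def power2_eq_square algebra_simps)
    also have "\<dots> = (sqdist k (x a) (x a0) + sqdist k (x b) (x a0) - sqdist k (x a) (x b)) / 2"
      by (simp add: sqdist_def sum_subtractf sum.distrib flip: sum_divide_distrib)
    finally show ?thesis
      using that \<open>a0 \<in> A\<close> by (simp add: B_def dist)
  qed
  have "finite B" using \<open>finite A\<close> by (simp add: B_def)
  note indep = independent_if_gram_one_plus_id[OF this _ gram] \<open>\<delta> > 0\<close>
  have "w ` B \<subseteq> fun_vec.span (unit_vec ` {..<k})"
    using truncation_in_span_unit_vec[of k "\<lambda>c. x _ c - x a0 c"] by (auto simp: w_def)
  then have "card (w ` B) \<le> card (unit_vec ` {..<k})"
    using fun_vec.independent_span_bound indep by auto
  also have "\<dots> \<le> k" using card_image_le[of "{..<k}" unit_vec] by simp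
  finally have "card B \<le> k" using indep by (simp add: card_image)
  then show ?thesis using \<open>finite A\<close> \<open>a0 \<in> A\<close> by (simp add: B_def)
qed simp

section \<open>Functions on the triangular grid with the mean value property\<close>

lemma tri_vertices_iff: "(i, j) \<in> tri_vertices r \<longleftrightarrow> 1 \<le> i \<and> i \<le> j \<and> j \<le> r"
  by (simp add: tri_vertices_def)

lemma tri_edges_doubleton: "e \<in> tri_edges r \<Longrightarrow> \<exists>u v. e = {u, v}"
  unfolding tri_edges_def by blast

lemma tri_edgesI:
  "(i, j) \<in> tri_vertices r \<Longrightarrow> (p, q) \<in> tri_vertices r \<Longrightarrow>
   (int i - int p, int j - int q) \<in> {(1,0), (-1,0), (0,1), (0,-1), (1,1), (-1,-1)} \<Longrightarrow>
   {(i, j), (p, q)} \<in> tri_edges r"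
  unfolding tri_edges_def by blast

lemma tri_edges_triangle:
  assumes "(i, j) \<in> tri_vertices r" "i < j"
  shows "{(i, j - 1), (i, j)} \<in> tri_edges r" "{(i, j), (Suc i, j)} \<in> tri_edges r"
    "{(i, j - 1), (Suc i, j)} \<in> tri_edges r"
proof -
  obtain j' where j: "j = Suc j'" using \<open>i < j\<close> by (cases j) auto
  have "(i, j') \<in> tri_vertices r" "(Suc i, Suc j') \<in> tri_vertices r"
    using assms by (auto simp: tri_vertices_iff j)
  note vertices = assms(1)[unfolded j] this
  show "{(i, j - 1), (i, j)} \<in> tri_edges r" unfolding j diff_Suc_1 by (intro tri_edgesI vertices) simp
  show "{(i, j), (Suc i, j)} \<in> tri_edges r" unfolding j diff_Suc_1 by (intro tri_edgesI vertices) simp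
  show "{(i, j - 1), (Suc i, j)} \<in> tri_edges r" unfolding j diff_Suc_1 by (intro tri_edgesI vertices) simp
qed

definition grid_span :: "nat \<times> nat \<Rightarrow> nat \<times> nat \<Rightarrow> nat" where
  "grid_span u v = max (snd u) (snd v) - min (fst u) (fst v)"

locale tri_mean_value =
  fixes r :: nat and f :: "nat \<times> nat \<Rightarrow> nat \<times> nat \<Rightarrow> real"
  assumes sym: "f u v = f v u"
    and diag: "f u u = 0"
    and edge: "{u, v} \<in> tri_edges r \<Longrightarrow> f u v = 0"
    and mean: "(i, j) \<in> tri_vertices r \<Longrightarrow> i < j \<Longrightarrow> f z (i, j) = (f z (i, j - 1) + f z (Suc i, j)) / 2"
begin

context
  fixes s :: nat
  assumes below: "\<And>u v. u \<in> tri_vertices r \<Longrightarrow> v \<in> tri_vertices r \<Longrightarrow> grid_span u v < s \<Longrightarrow> f u v = 0"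
begin

lemma reduce_right:
  assumes "(i, j) \<in> tri_vertices r" "(p, q) \<in> tri_vertices r" "i < p" "j < q" "q - i = s"
  shows "f (i, j) (p, q) = f (i, j) (q, q) / 2 ^ (q - p)"
  using assms
proof (induction "q - p" arbitrary: p)
  case (Suc n)
  then have "p < q" by simp
  have "f (i, j) (p, q) = (f (i, j) (p, q - 1) + f (i, j) (Suc p, q)) / 2"
    using Suc.prems \<open>p < q\<close> by (intro mean)
  moreover have "f (i, j) (p, q - 1) = 0"
    using Suc.prems \<open>p < q\<close> by (intro below) (auto simp: tri_vertices_iff grid_span_def)
  moreover have "f (i, j) (Suc p, q) = f (i, j) (q, q) / 2 ^ n"
    using Suc \<open>p < q\<close> by (auto simp: tri_vertices_iff)
  ultimately show ?case by (simp flip: Suc.hyps(2))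
qed (auto simp: tri_vertices_iff)

lemma reduce_left:
  assumes "(i, j) \<in> tri_vertices r" "(q, q) \<in> tri_vertices r" "j < q" "q - i = s"
  shows "f (i, j) (q, q) = f (i, i) (q, q) / 2 ^ (j - i)"
  using assms
proof (induction "j - i" arbitrary: j)
  case (Suc n)
  then have "i < j" by simp
  have "f (i, j) (q, q) = (f (q, q) (i, j - 1) + f (q, q) (Suc i, j)) / 2"
    using Suc.prems \<open>i < j\<close> by (subst sym) (intro mean)
  moreover have "f (q, q) (Suc i, j) = 0"
    using Suc.prems \<open>i < j\<close> by (intro below) (auto simp: tri_vertices_iff grid_span_def)
  moreover have "f (q, q) (i, j - 1) = f (i, i) (q, q) / 2 ^ n"
    using Suc \<open>i < j\<close> by (subst sym) (auto simp: tri_vertices_iff)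
  ultimately show ?case by (simp flip: Suc.hyps(2))
qed (auto simp: tri_vertices_iff)

lemma cross_eq_0:
  assumes "(i, j) \<in> tri_vertices r" "(p, q) \<in> tri_vertices r" "i < p" "j < q" "q - i = s"
  shows "f (i, j) (p, q) = 0"
proof -
  have qq: "(q, q) \<in> tri_vertices r"
    using assms by (auto simp: tri_vertices_iff)
  have "(i, q) \<in> tri_vertices r" "i < q" using assms by (auto simp: tri_vertices_iff)
  note triangle = tri_edges_triangle[OF this]
  have left: "(i, q - 1) \<in> tri_vertices r" and right: "(Suc i, q) \<in> tri_vertices r"
    using assms by (auto simp: tri_vertices_iff)
  text \<open>The edge \<open>v\<^sub>i\<^sub>,\<^sub>q\<^sub>-\<^sub>1 v\<^sub>i\<^sub>+\<^sub>1\<^sub>,\<^sub>q\<close> reduces to the diagonal pair \<open>v\<^sub>i\<^sub>,\<^sub>i v\<^sub>q\<^sub>,\<^sub>q\<close>.\<close>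
  have "0 = f (i, q - 1) (Suc i, q)"
    using edge[OF triangle(3)] by simp
  also have "\<dots> = f (i, i) (q, q) / 2 ^ (q - Suc i) / 2 ^ (q - 1 - i)"
    using reduce_right[OF left right] reduce_left[OF left qq] assms by simp
  finally have "f (i, i) (q, q) = 0" by simp
  then show ?thesis
    using reduce_right[OF assms] reduce_left[OF assms(1) qq assms(4,5)] by simp
qed

lemma ordered_eq_0:
  assumes "(i, j) \<in> tri_vertices r" "(p, q) \<in> tri_vertices r" "grid_span (i, j) (p, q) = s"
    and "i \<le> p" "i = p \<Longrightarrow> q \<le> j"
  shows "f (i, j) (p, q) = 0"
proof -
  consider "j < q" | "(i, j) = (p, q)" | "q \<le> j" "(i, j) \<noteq> (p, q)" by linarith
  then show ?thesis
  proof cases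
    case 1
    with assms have "i < p" by (cases "i = p") auto
    with 1 assms show ?thesis by (intro cross_eq_0) (auto simp: grid_span_def)
  next
    case 2
    then show ?thesis by (simp add: diag)
  next
    case 3
    with assms have "i < j" "j - i = s" by (auto simp: tri_vertices_iff grid_span_def)
    have "f (i, j) (p, q) = (f (p, q) (i, j - 1) + f (p, q) (Suc i, j)) / 2"
      using assms(1) \<open>i < j\<close> by (subst sym) (intro mean)
    moreover have "f (p, q) (i, j - 1) = 0"
    proof (cases "q < j")
      case True
      with assms 3 \<open>i < j\<close> show ?thesis by (intro below) (auto simp: tri_vertices_iff grid_span_def)
    next
      case False
      with assms 3 \<open>i < j\<close> \<open>j - i = s\<close> show ?thesis
        by (subst sym) (intro cross_eq_0, auto simp: tri_vertices_iff)
    qed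
    moreover have "f (p, q) (Suc i, j) = 0"
    proof (cases "i < p")
      case True
      with assms 3 \<open>i < j\<close> show ?thesis by (intro below) (auto simp: tri_vertices_iff grid_span_def)
    next
      case False
      with assms 3 \<open>i < j\<close> \<open>j - i = s\<close> show ?thesis
        by (intro cross_eq_0) (auto simp: tri_vertices_iff)
    qed
    ultimately show ?thesis by simp
  qed
qed

lemma span_eq_0:
  assumes "u \<in> tri_vertices r" "v \<in> tri_vertices r" "grid_span u v = s"
  shows "f u v = 0"
proof -
  obtain i j p q where uv: "u = (i, j)" "v = (p, q)" by fastforce
  show ?thesis
  proof (cases "i < p \<or> (i = p \<and> q \<le> j)")
    case True
    with assms show ?thesis unfolding uv by (intro ordered_eq_0) auto
  next
    case False
    with assms have "f v u = 0"
      unfolding uv by (intro ordered_eq_0) (auto simp: grid_span_def max.commute min.commute)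
    then show ?thesis by (simp add: sym)
  qed
qed

end

lemma eq_0:
  assumes "u \<in> tri_vertices r" "v \<in> tri_vertices r"
  shows "f u v = 0"
proof -
  have "f u v = 0" if "u \<in> tri_vertices r" "v \<in> tri_vertices r" "grid_span u v = s" for s u v
    using that
  proof (induction s arbitrary: u v rule: less_induct)
    case (less s)
    then show ?case by (rule span_eq_0[of s]) auto
  qed
  with assms show ?thesis by blast
qed

end

section \<open>The realization by averaged unit vectors\<close>

text \<open>\<open>bernstein_vec n i\<close> has coordinates \<open>(n choose (c - i)) / 2\<^sup>n\<close> for \<open>i \<le> c \<le> i + n\<close>.\<close>

fun bernstein_vec :: "nat \<Rightarrow> nat \<Rightarrow> nat \<Rightarrow> real" where
  "bernstein_vec 0 i = unit_vec i"
| "bernstein_vec (Suc n) i = (\<lambda>c. (bernstein_vec n i c + bernstein_vec n (Suc i) c) / 2)"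

definition tri_point :: "nat \<times> nat \<Rightarrow> nat \<Rightarrow> real" where
  "tri_point v = bernstein_vec (snd v - fst v) (fst v)"

abbreviation tri_dist :: "nat \<Rightarrow> (nat \<times> nat) set \<Rightarrow> real" where
  "tri_dist r \<equiv> edge_length (Suc r) tri_point"

lemma bernstein_vec_eq_0: "i + n < c \<Longrightarrow> bernstein_vec n i c = 0"
  by (induction n arbitrary: i) (auto simp: unit_vec_def)

lemma tri_point_diag: "tri_point (i, i) = unit_vec i"
  by (simp add: tri_point_def)

lemma tri_point_mean:
  assumes "i < j"
  shows "tri_point (i, j) c = (tri_point (i, j - 1) c + tri_point (Suc i, j) c) / 2"
proof -
  have "j - i = Suc (j - Suc i)" "j - 1 - i = j - Suc i" using assms by auto
  then show ?thesis by (simp add: tri_point_def)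
qed

lemma sqdist_unit_vec:
  assumes "a < k" "b < k" "a \<noteq> b"
  shows "sqdist k (unit_vec a) (unit_vec b) = 2"
proof -
  have "sqdist k (unit_vec a) (unit_vec b) = (\<Sum>c<k. if c \<in> {a, b} then 1 else 0)"
    unfolding sqdist_def using assms by (intro sum.cong refl) (auto simp: unit_vec_def)
  also have "\<dots> = (\<Sum>c\<in>{a, b}. 1)"
    using assms by (intro sum.mono_neutral_cong_right) auto
  finally show ?thesis using assms by simp
qed

lemma tri_point_embedding:
  "isometric_embedding (tri_vertices r) (tri_edges r) (tri_dist r) (Suc r) tri_point"
  by (rule isometric_embedding_edge_length)
    (auto simp: tri_vertices_def tri_point_def intro!: bernstein_vec_eq_0)

lemma distance_function_tri_dist: "distance_function (tri_vertices r) (tri_edges r) (tri_dist r)"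
  by (rule distance_function_edge_length) (rule tri_edges_doubleton)

section \<open>Rigidity of the realizations of the grid distance\<close>

context
  fixes r k :: nat and \<phi> :: "nat \<times> nat \<Rightarrow> nat \<Rightarrow> real"
  assumes emb: "isometric_embedding (tri_vertices r) (tri_edges r) (tri_dist r) k \<phi>"
begin

lemma sqdist_edge:
  assumes "{u, v} \<in> tri_edges r"
  shows "sqdist k (\<phi> u) (\<phi> v) = sqdist (Suc r) (tri_point u) (tri_point v)"
proof (rule sqdist_eq_if_l2dist_eq)
  show "l2dist k (\<phi> u) (\<phi> v) = l2dist (Suc r) (tri_point u) (tri_point v)"
    using emb assms unfolding isometric_embedding_def edge_length_doubleton by blast
qed

lemma embedding_mean:
  assumes "(i, j) \<in> tri_vertices r" "i < j" "c < k"
  shows "\<phi> (i, j) c = (\<phi> (i, j - 1) c + \<phi> (Suc i, j) c) / 2"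
proof (rule midpoint_if_sqdist_quarter[OF _ _ \<open>c < k\<close>])
  note triangle = tri_edges_triangle[OF assms(1,2)]
  have "sqdist (Suc r) (tri_point (i, j - 1)) (tri_point (i, j))
      = sqdist (Suc r) (tri_point (i, j - 1)) (tri_point (Suc i, j)) / 4"
    "sqdist (Suc r) (tri_point (i, j)) (tri_point (Suc i, j))
      = sqdist (Suc r) (tri_point (i, j - 1)) (tri_point (Suc i, j)) / 4"
    using tri_point_mean[OF \<open>i < j\<close>] by (rule sqdist_to_midpoint)+
  with sqdist_edge[OF triangle(1)] sqdist_edge[OF triangle(2)] sqdist_edge[OF triangle(3)]
  show "sqdist k (\<phi> (i, j - 1)) (\<phi> (i, j)) = sqdist k (\<phi> (i, j - 1)) (\<phi> (Suc i, j)) / 4"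
    "sqdist k (\<phi> (i, j)) (\<phi> (Suc i, j)) = sqdist k (\<phi> (i, j - 1)) (\<phi> (Suc i, j)) / 4"
    by simp_all
qed

lemma tri_mean_value_sqdist_defect:
  "tri_mean_value r (\<lambda>u v. sqdist k (\<phi> u) (\<phi> v) - sqdist (Suc r) (tri_point u) (tri_point v))"
proof
  fix i j and z :: "nat \<times> nat"
  assume ij: "(i, j) \<in> tri_vertices r" "i < j"
  have "sqdist k (\<phi> z) (\<phi> (i, j)) = (sqdist k (\<phi> z) (\<phi> (i, j - 1)) + sqdist k (\<phi> z) (\<phi> (Suc i, j))) / 2
      - sqdist k (\<phi> (i, j - 1)) (\<phi> (Suc i, j)) / 4"
    using embedding_mean[OF ij] by (rule sqdist_midpoint)
  moreover have "sqdist (Suc r) (tri_point z) (tri_point (i, j))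
      = (sqdist (Suc r) (tri_point z) (tri_point (i, j - 1)) + sqdist (Suc r) (tri_point z) (tri_point (Suc i, j))) / 2
      - sqdist (Suc r) (tri_point (i, j - 1)) (tri_point (Suc i, j)) / 4"
    using tri_point_mean[OF \<open>i < j\<close>] by (rule sqdist_midpoint)
  ultimately show "sqdist k (\<phi> z) (\<phi> (i, j)) - sqdist (Suc r) (tri_point z) (tri_point (i, j)) =
    (sqdist k (\<phi> z) (\<phi> (i, j - 1)) - sqdist (Suc r) (tri_point z) (tri_point (i, j - 1)) +
     (sqdist k (\<phi> z) (\<phi> (Suc i, j)) - sqdist (Suc r) (tri_point z) (tri_point (Suc i, j)))) / 2"
    using sqdist_edge[OF tri_edges_triangle(3)[OF ij]] by (simp add: field_simps)
qed (auto simp: sqdist_commute sqdist_edge)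

lemma embedding_dim_ge: "r - 1 \<le> k"
proof -
  interpret defect: tri_mean_value r
    "\<lambda>u v. sqdist k (\<phi> u) (\<phi> v) - sqdist (Suc r) (tri_point u) (tri_point v)"
    by (rule tri_mean_value_sqdist_defect)
  have "sqdist k (\<phi> (a, a)) (\<phi> (b, b)) = 2" if "a \<in> {1..r}" "b \<in> {1..r}" "a \<noteq> b" for a b
    using defect.eq_0[of "(a, a)" "(b, b)"] that
    by (simp add: tri_vertices_iff tri_point_diag sqdist_unit_vec)
  then have "card {1..r} \<le> Suc k"
    by (intro card_le_Suc_if_pairwise_sqdist[where x = "\<lambda>a. \<phi> (a, a)" and \<delta> = 2]) auto
  then show ?thesis by simp
qed

end

theorem mainTheorem4:
  fixes r :: nat
  shows "enat (r - 1) \<le> f2 (tri_vertices r) (tri_edges r)"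
proof -
  let ?V = "tri_vertices r" and ?E = "tri_edges r"
  have embeddable: "embeddable ?V ?E (tri_dist r) (Suc r)"
    using tri_point_embedding by (auto simp: embeddable_def)
  then obtain \<phi> where "isometric_embedding ?V ?E (tri_dist r) (f2_dist ?V ?E (tri_dist r)) \<phi>"
    using embeddable_f2_dist unfolding embeddable_def by blast
  then have "r - 1 \<le> f2_dist ?V ?E (tri_dist r)"
    by (rule embedding_dim_ge)
  moreover have "enat (f2_dist ?V ?E (tri_dist r)) \<le> f2 ?V ?E"
    using distance_function_tri_dist embeddable by (rule f2_dist_le_f2)
  ultimately show ?thesis
    by (metis enat_ord_simps(1) order_trans)
qed

end
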